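(* Let $p$ be an odd prime and $a,c$ positive integers such that $c$ is a primitive divisor of $p^a-1$. If $\tfrac{p^a-1}{c}$ is odd, then $$g\Big(\tfrac{p^{2a}-1}{2c},\,p^{2a}\Big)=2\,g\Big(\tfrac{p^a-1}{c},\,p^a\Big).$$
   Context: For a prime power $q$ and a positive integer $k$, the Waring number $g(k,q)$ is the smallest $s$ (if it exists) such that every element of $\mathbb{F}_q$ is a sum of $s$ $k$-th powers of elements of $\mathbb{F}_q$. An integer $e$ is a primitive divisor of $p^a-1$ if $e\mid p^a-1$ and $e\nmid p^t-1$ for every $1\le t<a$. *)

theory Defs
  imports "HOL-Computational_Algebra.Primes"
begin

definition sum_of_kth_powers :: "nat \<Rightarrow> nat \<Rightarrow> 'a::field \<Rightarrow> bool" where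
  "sum_of_kth_powers k s x \<longleftrightarrow> (\<exists>f :: nat \<Rightarrow> 'a. x = (\<Sum>i<s. f i ^ k))"

text \<open>Waring number g(k,q) of the finite field 'a (with q = CARD('a)):
  the smallest s such that every element is a sum of s k-th powers.\<close>
definition waring_number :: "nat \<Rightarrow> 'a::{finite,field} itself \<Rightarrow> nat" where
  "waring_number k _ = (LEAST s. \<forall>x :: 'a. sum_of_kth_powers k s x)"

definition primitive_divisor :: "nat \<Rightarrow> nat \<Rightarrow> nat \<Rightarrow> bool" where
  "primitive_divisor e p a \<longleftrightarrow>
     e dvd p ^ a - 1 \<and> (\<forall>t. 1 \<le> t \<and> t < a \<longrightarrow> \<not> e dvd p ^ t - 1)"

end

theory Submission
  imports Defs "HOL-Library.Cardinality" "HOL-Algebra.Multiplicative_Group" "HOL-Computational_Algebra.Polynomial"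
begin

text \<open>
  Write \<open>q = p ^ a\<close>, \<open>k = (q - 1) / c\<close> and \<open>K = (q\<^sup>2 - 1) / (2 c)\<close>. In a finite field with
  \<open>n\<close> elements the nonzero \<open>e\<close>-th powers are the roots of unity of order \<open>(n - 1) / e\<close>, so the
  nonzero \<open>k\<close>-th powers of \<open>F\<^sub>q\<close> form \<open>\<mu>\<^sub>c\<close> and the nonzero \<open>K\<close>-th powers of \<open>F\<^sub>q\<^sub>\<^sup>2\<close>
  form \<open>\<mu>\<^sub>2\<^sub>c = \<mu>\<^sub>c \<union> \<omega> \<mu>\<^sub>c\<close> with \<open>\<omega>\<^sup>c = -1\<close>. Embedding \<open>F\<^sub>q\<close> into \<open>F\<^sub>q\<^sub>\<^sup>2\<close>, the group
  \<open>\<mu>\<^sub>c\<close> lies in \<open>F\<^sub>q\<close> while \<open>\<omega>\<close> does not (\<open>\<omega>\<^sup>q = -\<omega>\<close> because \<open>k\<close> and \<open>p\<close> are odd). Hence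
  \<open>F\<^sub>q\<^sub>\<^sup>2 = F\<^sub>q \<oplus> \<omega> F\<^sub>q\<close>, and \<open>u + \<omega> v\<close> is a sum of \<open>s\<close> \<open>K\<close>-th powers exactly when \<open>u\<close> and
  \<open>v\<close> are sums of \<open>i\<close> and \<open>j\<close> \<open>k\<close>-th powers with \<open>i + j = s\<close>; this doubles the Waring number.
  The primitive-divisor hypothesis makes \<open>g(k, q)\<close> exist: the \<open>k\<close>-th powers contain an element
  of order \<open>c\<close>, which lies in no proper subfield, so their sums exhaust \<open>F\<^sub>q\<close>.

  The library has no uniqueness theorem for finite fields, so the embedding \<open>F\<^sub>q \<rightarrow> F\<^sub>q\<^sub>\<^sup>2\<close> is
  built directly: a minimal integer polynomial of a generator of \<open>F\<^sub>q\<^sup>*\<close> divides \<open>X\<^sup>q - X\<close>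
  modulo \<open>p\<close> and therefore has a root in \<open>F\<^sub>q\<^sub>\<^sup>2\<close>.
\<close>

section \<open>Finite fields\<close>

lemma one_less_card_field: "1 < CARD('a::{finite,field})"
  using card_mono[of UNIV "{0::'a, 1}"] by simp

lemma power_card_nonzero_eq_1:
  fixes L :: "'a::{finite,field} set"
  assumes mult_closed: "\<And>x y. x \<in> L \<Longrightarrow> y \<in> L \<Longrightarrow> x * y \<in> L"
    and "y \<in> L" and "y \<noteq> 0"
  shows "y ^ card (L - {0}) = 1"
proof -
  let ?U = "L - {0}"
  have "bij_betw (\<lambda>x. y * x) ?U ?U"
  proof -
    have inj: "inj_on (\<lambda>x. y * x) ?U" using \<open>y \<noteq> 0\<close> by (auto simp: inj_on_def)
    moreover have "(\<lambda>x. y * x) ` ?U \<subseteq> ?U" using assms by auto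
    ultimately have "(\<lambda>x. y * x) ` ?U = ?U" by (intro card_subset_eq) (auto simp: card_image)
    with inj show ?thesis by (simp add: bij_betw_def)
  qed
  then have "(\<Prod>x\<in>?U. y * x) = (\<Prod>x\<in>?U. x)"
    using prod.reindex_bij_betw[of _ ?U ?U "\<lambda>x. x"] by simp
  then have "y ^ card ?U * (\<Prod>x\<in>?U. x) = 1 * (\<Prod>x\<in>?U. x)"
    by (simp add: prod.distrib)
  then show ?thesis by (subst (asm) mult_cancel_right) simp
qed

lemma power_card_minus_one_eq_1:
  fixes y :: "'a::{finite,field}"
  assumes "y \<noteq> 0"
  shows "y ^ (CARD('a) - 1) = 1"
  using power_card_nonzero_eq_1[of UNIV y] assms by (simp add: card_Diff_singleton)

lemma power_card_eq_self:
  fixes y :: "'a::{finite,field}"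
  shows "y ^ CARD('a) = y"
proof (cases "y = 0")
  case False
  have "CARD('a) = Suc (CARD('a) - 1)"
    using finite_UNIV_card_ge_0[where 'a='a] by simp
  then show ?thesis using power_card_minus_one_eq_1[OF False] by (metis power_Suc mult.right_neutral)
qed (simp add: finite_UNIV_card_ge_0)

lemma of_nat_card_eq_0: "of_nat CARD('a) = (0::'a::{finite,field})"
proof -
  have "bij (\<lambda>x::'a. x + 1)" by (rule bij_betwI[where g="\<lambda>x. x - 1"]) auto
  from sum.reindex_bij_betw[OF this, of "\<lambda>x. x"]
  have "(\<Sum>x\<in>UNIV. x + 1) = (\<Sum>x\<in>UNIV. x :: 'a)" by simp
  then show ?thesis by (simp add: sum.distrib)
qed

lemma CHAR_eq_prime:
  assumes "prime p" and "n > 0" and "CARD('a::{finite,field}) = p ^ n"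
  shows "CHAR('a) = p"
proof -
  have "(of_nat p :: 'a) ^ n = 0"
    using of_nat_card_eq_0[where 'a='a] assms(3) by simp
  then have "CHAR('a) dvd p"
    by (simp add: of_nat_eq_0_iff_char_dvd)
  with assms(1) show ?thesis
    by (metis CHAR_not_1 One_nat_def prime_nat_iff)
qed

lemma exists_multiplicative_generator:
  "\<exists>g::'a::{finite,field}. g \<noteq> 0 \<and> (\<forall>x. x \<noteq> 0 \<longrightarrow> (\<exists>i. x = g ^ i))"
proof -
  let ?R = "\<lparr>carrier = UNIV, mult = (*), one = 1, zero = 0, add = (+)\<rparr> :: 'a ring"
  have "field ?R"
  proof -
    have [simp]: "\<exists>y::'a. x + y = 0" for x :: 'a by (rule exI[of _ "-x"]) simp
    have [simp]: "x \<noteq> 0 \<Longrightarrow> \<exists>y::'a. y * x = 1 \<and> x * y = 1" for x :: 'a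
      by (intro exI[of _ "inverse x"]) simp
    have [simp]: "x \<noteq> 0 \<Longrightarrow> \<exists>y::'a. x * y = 1" for x :: 'a
      by (intro exI[of _ "inverse x"]) simp
    show ?thesis by unfold_locales (auto simp: field_simps Units_def)
  qed
  have pow: "x [^]\<^bsub>?R\<^esub> (n::nat) = x ^ n" for x :: 'a and n
    by (induction n) (simp_all add: mult.commute)
  obtain g where "g \<in> carrier (mult_of ?R)" and "carrier (mult_of ?R) = {g [^]\<^bsub>?R\<^esub> i | i::nat. i \<in> UNIV}"
    using field.finite_field_mult_group_has_gen[OF \<open>field ?R\<close>] by auto
  then show ?thesis by (intro exI[of _ g]) (auto simp: pow)
qed

lemma generator_power_eq_1_iff:
  fixes g :: "'a::{finite,field}"
  assumes "g \<noteq> 0" and gen: "\<forall>x. x \<noteq> 0 \<longrightarrow> (\<exists>i. x = g ^ i)"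
  shows "g ^ i = 1 \<longleftrightarrow> CARD('a) - 1 dvd i"
proof
  assume "CARD('a) - 1 dvd i"
  then show "g ^ i = 1" using power_card_minus_one_eq_1[OF \<open>g \<noteq> 0\<close>] by (auto simp: power_mult)
next
  assume "g ^ i = 1"
  define r where "r = i mod (CARD('a) - 1)"
  have "g ^ i = (g ^ (CARD('a) - 1)) ^ (i div (CARD('a) - 1)) * g ^ r"
    by (simp add: r_def flip: power_mult power_add)
  then have gr: "g ^ r = 1" using \<open>g ^ i = 1\<close> power_card_minus_one_eq_1[OF \<open>g \<noteq> 0\<close>] by simp
  show "CARD('a) - 1 dvd i"
  proof (rule ccontr)
    assume "\<not> CARD('a) - 1 dvd i"
    then have "0 < r" "r < CARD('a) - 1"
      using one_less_card_field[where 'a='a] by (auto simp: r_def dvd_eq_mod_eq_0)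
    have "UNIV - {0} \<subseteq> (\<lambda>j. g ^ j) ` {..<r}"
    proof
      fix x :: 'a assume "x \<in> UNIV - {0}"
      then obtain j where "x = g ^ j" using gen by blast
      also have "\<dots> = (g ^ r) ^ (j div r) * g ^ (j mod r)"
        by (simp flip: power_mult power_add)
      finally show "x \<in> (\<lambda>j. g ^ j) ` {..<r}" using gr \<open>0 < r\<close> by auto
    qed
    from card_mono[OF _ this] have "card (UNIV - {0::'a}) \<le> r"
      using card_image_le[of "{..<r}" "\<lambda>j. g ^ j"] by simp
    then show False using \<open>r < CARD('a) - 1\<close> by (simp add: card_Diff_singleton)
  qed
qed

lemma exists_primitive_element:
  "\<exists>g::'a::{finite,field}. g \<noteq> 0 \<and> (\<forall>x. x \<noteq> 0 \<longrightarrow> (\<exists>i. x = g ^ i))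
      \<and> (\<forall>i. g ^ i = 1 \<longleftrightarrow> CARD('a) - 1 dvd i)"
proof -
  obtain g :: 'a where "g \<noteq> 0" and gen: "\<forall>x. x \<noteq> 0 \<longrightarrow> (\<exists>i. x = g ^ i)"
    using exists_multiplicative_generator by blast
  with generator_power_eq_1_iff[OF \<open>g \<noteq> 0\<close> gen] show ?thesis by blast
qed

lemma nth_power_iff:
  fixes z :: "'a::{finite,field}"
  assumes "e dvd CARD('a) - 1" and "z \<noteq> 0"
  shows "(\<exists>y. z = y ^ e) \<longleftrightarrow> z ^ ((CARD('a) - 1) div e) = 1"
proof -
  obtain f where N: "CARD('a) - 1 = e * f" using assms(1) by blast
  moreover have "0 < CARD('a) - 1" using one_less_card_field[where 'a='a] by simp
  ultimately have "0 < e" "0 < f" by simp_all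
  show ?thesis
  proof
    assume "\<exists>y. z = y ^ e"
    then obtain y where "z = y ^ e" by blast
    with assms(2) \<open>0 < e\<close> have "y \<noteq> 0" by auto
    from power_card_minus_one_eq_1[OF this] show "z ^ ((CARD('a) - 1) div e) = 1"
      using \<open>z = y ^ e\<close> \<open>0 < e\<close> N by (simp flip: power_mult)
  next
    obtain g :: 'a where "\<forall>x. x \<noteq> 0 \<longrightarrow> (\<exists>i. x = g ^ i)"
      and ord: "\<And>i. g ^ i = 1 \<longleftrightarrow> CARD('a) - 1 dvd i"
      using exists_primitive_element[where 'a='a] by blast
    then obtain i where i: "z = g ^ i" using assms(2) by blast
    assume "z ^ ((CARD('a) - 1) div e) = 1"
    then have "g ^ (i * f) = 1" using i N \<open>0 < e\<close> by (simp add: power_mult)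
    then have "e * f dvd i * f" using ord N by simp
    then obtain j where "i = e * j" using \<open>0 < f\<close> by (auto elim: dvdE)
    then have "z = (g ^ j) ^ e" using i by (simp add: mult.commute flip: power_mult)
    then show "\<exists>y. z = y ^ e" by blast
  qed
qed

lemma card_roots_of_unity_le:
  assumes "0 < d"
  shows "card {z::'a::idom. z ^ d = 1} \<le> d"
proof -
  have "coeff (monom (1::'a) d - 1) d = 1"
    using assms by simp
  then have "monom (1::'a) d - 1 \<noteq> 0" by (metis coeff_0 zero_neq_one)
  from card_poly_roots_bound[OF this]
  have "card {z. z ^ d = (1::'a)} \<le> degree (monom (1::'a) d - 1)"
    by (simp add: poly_monom)
  also have "\<dots> \<le> d"
    by (rule degree_diff_le) (auto simp: degree_monom_le)
  finally show ?thesis .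
qed

lemma card_roots_of_unity:
  assumes "d dvd CARD('a::{finite,field}) - 1"
  shows "card {z::'a. z ^ d = 1} = d"
proof -
  obtain f where N: "CARD('a) - 1 = d * f" using assms by blast
  moreover have "0 < CARD('a) - 1" using one_less_card_field[where 'a='a] by simp
  ultimately have "0 < d" "0 < f" by simp_all
  obtain g :: 'a where ord: "\<And>i. g ^ i = 1 \<longleftrightarrow> CARD('a) - 1 dvd i"
    using exists_primitive_element[where 'a='a] by blast
  have "inj_on (\<lambda>j. g ^ (f * j)) {..<d}"
  proof (rule linorder_inj_onI')
    fix i j assume "j \<in> {..<d}" "i < j"
    then have "0 < f * (j - i)" "f * (j - i) < d * f"
      using \<open>0 < f\<close> by (simp_all add: mult.commute)
    then have "\<not> d * f dvd f * (j - i)" by (rule nat_dvd_not_less)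
    then have "g ^ (f * (j - i)) \<noteq> 1" using ord N by simp
    moreover have "g ^ (f * j) = g ^ (f * (j - i)) * g ^ (f * i)"
      using \<open>i < j\<close> by (simp add: diff_mult_distrib2 flip: power_add)
    moreover have "g \<noteq> 0"
      using ord[of "CARD('a) - 1"] N \<open>0 < d\<close> \<open>0 < f\<close> by (auto simp: power_0_left)
    ultimately show "g ^ (f * i) \<noteq> g ^ (f * j)" by auto
  qed
  moreover have "(\<lambda>j. g ^ (f * j)) ` {..<d} \<subseteq> {z. z ^ d = 1}"
    using ord N by (auto simp: mult.commute simp flip: power_mult)
  ultimately have "d \<le> card {z::'a. z ^ d = 1}"
    by (metis card_image card_lessThan card_mono finite)
  with card_roots_of_unity_le[OF \<open>0 < d\<close>, where 'a='a] show ?thesis by simp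
qed

lemma range_power_eq:
  assumes "e dvd CARD('a::{finite,field}) - 1" and "0 < e"
  shows "range (\<lambda>y::'a. y ^ e) = insert 0 {z. z ^ ((CARD('a) - 1) div e) = 1}"
proof (rule Set.set_eqI)
  fix z :: 'a
  show "z \<in> range (\<lambda>y. y ^ e) \<longleftrightarrow> z \<in> insert 0 {z. z ^ ((CARD('a) - 1) div e) = 1}"
  proof (cases "z = 0")
    case True
    have "(0::'a) = 0 ^ e" using assms(2) by simp
    with True show ?thesis by auto
  next
    case False
    have "z \<in> range (\<lambda>y. y ^ e) \<longleftrightarrow> (\<exists>y. z = y ^ e)" by auto
    with nth_power_iff[OF assms(1) False] False show ?thesis by simp
  qed
qed

lemma exists_power_eq_minus_one:
  assumes "2 * c dvd CARD('a::{finite,field}) - 1"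
  shows "\<exists>\<omega>::'a. \<omega> ^ c = - 1"
proof -
  obtain f where N: "CARD('a) - 1 = 2 * c * f" using assms by blast
  moreover have "0 < CARD('a) - 1" using one_less_card_field[where 'a='a] by simp
  ultimately have "0 < c * f" by simp
  obtain g :: 'a where ord: "\<And>i. g ^ i = 1 \<longleftrightarrow> CARD('a) - 1 dvd i"
    using exists_primitive_element[where 'a='a] by blast
  have "((g ^ f) ^ c) ^ 2 = 1"
    using ord N by (simp add: mult_ac flip: power_mult)
  moreover have "\<not> 2 * c * f dvd f * c"
    using \<open>0 < c * f\<close> by (intro nat_dvd_not_less) (simp_all add: mult.commute)
  then have "(g ^ f) ^ c \<noteq> 1"
    using ord N by (simp flip: power_mult)
  ultimately show ?thesis by (auto simp: power2_eq_1_iff)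
qed

lemma roots_of_unity_double:
  fixes \<omega> :: "'a::field"
  assumes "\<omega> ^ c = - 1"
  shows "{z. z ^ (2 * c) = 1} = {z. z ^ c = 1} \<union> (\<lambda>z. \<omega> * z) ` {z. z ^ c = 1}"
proof (intro equalityI subsetI)
  fix z :: 'a assume "z \<in> {z. z ^ (2 * c) = 1}"
  then have "(z ^ c) ^ 2 = 1" by (simp add: mult.commute flip: power_mult)
  then have "z ^ c = 1 \<or> z ^ c = - 1" by (simp add: power2_eq_1_iff)
  then show "z \<in> {z. z ^ c = 1} \<union> (\<lambda>z. \<omega> * z) ` {z. z ^ c = 1}"
  proof (cases "z ^ c = 1")
    case False
    with \<open>z ^ c = 1 \<or> z ^ c = - 1\<close> have "z ^ c = - 1" by simp
    from False have "c \<noteq> 0" by (metis power_0)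
    then have "\<omega> \<noteq> 0" using assms by (auto simp: zero_power)
    then have "z = \<omega> * (z / \<omega>)" and "(z / \<omega>) ^ c = 1"
      using \<open>z ^ c = - 1\<close> assms by (simp_all add: power_divide)
    then show ?thesis by blast
  qed simp
next
  fix z :: 'a assume "z \<in> {z. z ^ c = 1} \<union> (\<lambda>z. \<omega> * z) ` {z. z ^ c = 1}"
  then consider "z ^ c = 1" | w where "w ^ c = 1" "z = \<omega> * w" by blast
  then have "(z ^ c) ^ 2 = 1"
    by cases (simp_all add: assms power_mult_distrib)
  then show "z \<in> {z. z ^ (2 * c) = 1}" by (simp add: mult.commute power_mult)
qed

lemma card_additive_subgroup_dvd:
  fixes L :: "'a::{finite,ab_group_add} set"
  assumes "0 \<in> L" and diff_closed: "\<And>x y. x \<in> L \<Longrightarrow> y \<in> L \<Longrightarrow> x - y \<in> L"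
  shows "card L dvd CARD('a)"
proof -
  define coset where "coset x = {w. w - x \<in> L}" for x :: 'a
  have card_coset: "card (coset x) = card L" for x
  proof -
    have "bij_betw (\<lambda>l. l + x) L (coset x)"
      by (rule bij_betw_byWitness[where f'="\<lambda>w. w - x"]) (auto simp: coset_def)
    then show ?thesis by (simp add: bij_betw_same_card)
  qed
  have coset_disjoint: "coset x \<inter> coset y = {}" if "coset x \<noteq> coset y" for x y
  proof (rule ccontr)
    assume "coset x \<inter> coset y \<noteq> {}"
    then obtain t where tx: "t - x \<in> L" and ty: "t - y \<in> L" by (auto simp: coset_def)
    have "(t - x) - (t - y) = y - x" "(t - y) - (t - x) = x - y" by simp_all
    then have xy: "y - x \<in> L" and yx: "x - y \<in> L"
      using diff_closed[OF tx ty] diff_closed[OF ty tx] by simp_all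
    have "(w - x) - (y - x) = w - y" "(w - y) - (x - y) = w - x" for w by simp_all
    then have "w - x \<in> L \<longleftrightarrow> w - y \<in> L" for w
      using diff_closed[OF _ xy, of "w - x"] diff_closed[OF _ yx, of "w - y"] by metis
    then show False using that by (simp add: coset_def)
  qed
  have "card L * card (range coset) = card (\<Union>(range coset))"
    by (rule card_partition) (use card_coset coset_disjoint in auto)
  moreover have "\<Union>(range coset) = UNIV"
    using \<open>0 \<in> L\<close> by (auto simp: coset_def)
  ultimately show ?thesis by (metis dvd_triv_left)
qed

section \<open>Sums of \<open>k\<close>-th powers and Waring numbers\<close>

lemma sum_of_kth_powers_0_iff: "sum_of_kth_powers k 0 x \<longleftrightarrow> x = 0"
  by (simp add: sum_of_kth_powers_def)

lemma sum_of_kth_powers_Suc_iff: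
  "sum_of_kth_powers k (Suc s) z \<longleftrightarrow> (\<exists>x y. sum_of_kth_powers k s x \<and> z = x + y ^ k)"
proof
  assume "sum_of_kth_powers k (Suc s) z"
  then obtain f where "z = (\<Sum>i<Suc s. f i ^ k)" by (auto simp: sum_of_kth_powers_def)
  then have "z = (\<Sum>i<s. f i ^ k) + f s ^ k" by simp
  then show "\<exists>x y. sum_of_kth_powers k s x \<and> z = x + y ^ k"
    unfolding sum_of_kth_powers_def by blast
next
  assume "\<exists>x y. sum_of_kth_powers k s x \<and> z = x + y ^ k"
  then obtain f y where z: "z = (\<Sum>i<s. f i ^ k) + y ^ k" by (auto simp: sum_of_kth_powers_def)
  define f' where "f' = f(s := y)"
  have "(\<Sum>i<s. f i ^ k) = (\<Sum>i<s. f' i ^ k)" by (rule sum.cong) (auto simp: f'_def)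
  then have "z = (\<Sum>i<Suc s. f' i ^ k)" using z by (simp add: f'_def)
  then show "sum_of_kth_powers k (Suc s) z" unfolding sum_of_kth_powers_def by blast
qed

lemma sum_of_kth_powers_power: "sum_of_kth_powers k 1 (y ^ k)"
  unfolding One_nat_def sum_of_kth_powers_Suc_iff
  by (intro exI[of _ 0] exI[of _ y]) (simp add: sum_of_kth_powers_0_iff)

lemma sum_of_kth_powers_add:
  assumes "sum_of_kth_powers k i x" and "sum_of_kth_powers k j y"
  shows "sum_of_kth_powers k (i + j) (x + y)"
  using assms(2)
proof (induction j arbitrary: y)
  case 0
  with assms(1) show ?case by (simp add: sum_of_kth_powers_0_iff)
next
  case (Suc j)
  then obtain y' w where "sum_of_kth_powers k j y'" and "y = y' + w ^ k"
    by (auto simp: sum_of_kth_powers_Suc_iff)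
  with Suc.IH show ?case
    unfolding add_Suc_right sum_of_kth_powers_Suc_iff
    by (intro exI[of _ "x + y'"] exI[of _ w]) (simp add: add.assoc)
qed

lemma sum_of_kth_powers_zero:
  assumes "0 < k"
  shows "sum_of_kth_powers k s 0"
proof (induction s)
  case (Suc s)
  with assms show ?case
    unfolding sum_of_kth_powers_Suc_iff by (intro exI[of _ 0] exI[of _ 0]) simp
qed (simp add: sum_of_kth_powers_0_iff)

lemma sum_of_kth_powers_mono:
  assumes "0 < k" and "sum_of_kth_powers k i x" and "i \<le> j"
  shows "sum_of_kth_powers k j x"
  using sum_of_kth_powers_add[OF assms(2) sum_of_kth_powers_zero[OF assms(1)], of "j - i"] assms(3)
  by simp

lemma sum_of_kth_powers_mult_power:
  assumes "sum_of_kth_powers k i x"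
  shows "sum_of_kth_powers k i (x * y ^ k)"
proof -
  from assms obtain f where "x = (\<Sum>l<i. f l ^ k)" by (auto simp: sum_of_kth_powers_def)
  then have "x * y ^ k = (\<Sum>l<i. (f l * y) ^ k)" by (simp add: sum_distrib_right power_mult_distrib)
  then show ?thesis unfolding sum_of_kth_powers_def by (rule exI[of _ "\<lambda>l. f l * y"])
qed

lemma sum_of_kth_powers_mult:
  assumes "sum_of_kth_powers k i x" and "sum_of_kth_powers k j y"
  shows "sum_of_kth_powers k (i * j) (x * y)"
  using assms(2)
proof (induction j arbitrary: y)
  case 0
  then show ?case by (simp add: sum_of_kth_powers_0_iff)
next
  case (Suc j)
  then obtain y' w where "sum_of_kth_powers k j y'" and y: "y = y' + w ^ k"
    by (auto simp: sum_of_kth_powers_Suc_iff)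
  with Suc.IH sum_of_kth_powers_mult_power[OF assms(1)]
  have "sum_of_kth_powers k (i * j + i) (x * y' + x * w ^ k)"
    by (intro sum_of_kth_powers_add) auto
  then show ?case using y by (simp add: algebra_simps)
qed

lemma additive_map_zero:
  fixes f :: "'a::monoid_add \<Rightarrow> 'b::group_add"
  assumes "\<And>x y. f (x + y) = f x + f y"
  shows "f 0 = 0"
  using assms[of 0 0] by (metis add.right_neutral add_left_cancel)

lemma sum_of_kth_powers_image:
  fixes \<psi> :: "'a::field \<Rightarrow> 'b::field"
  assumes additive: "\<And>x y. \<psi> (x + y) = \<psi> x + \<psi> y"
    and powers: "\<And>x. \<psi> (x ^ k) \<in> range (\<lambda>y. y ^ K)"
    and "sum_of_kth_powers k s u"
  shows "sum_of_kth_powers K s (\<psi> u)"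
  using assms(3)
proof (induction s arbitrary: u)
  case 0
  then show ?case using additive_map_zero[OF additive] by (simp add: sum_of_kth_powers_0_iff)
next
  case (Suc s)
  then obtain u' x where "sum_of_kth_powers k s u'" and "u = u' + x ^ k"
    by (auto simp: sum_of_kth_powers_Suc_iff)
  moreover obtain y where "\<psi> (x ^ k) = y ^ K" using powers by (metis rangeE)
  ultimately show ?case using Suc.IH additive by (auto simp: sum_of_kth_powers_Suc_iff)
qed

lemma sum_of_kth_powers_split:
  fixes \<phi> \<psi> :: "'a::field \<Rightarrow> 'b::field"
  assumes additive: "\<And>x y. \<phi> (x + y) = \<phi> x + \<phi> y" "\<And>x y. \<psi> (x + y) = \<psi> x + \<psi> y"
    and powers: "range (\<lambda>y. y ^ K) \<subseteq> \<phi> ` range (\<lambda>x. x ^ k) \<union> \<psi> ` range (\<lambda>x. x ^ k)"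
    and "sum_of_kth_powers K s z"
  shows "\<exists>u v i j. i + j = s \<and> sum_of_kth_powers k i u \<and> sum_of_kth_powers k j v
           \<and> z = \<phi> u + \<psi> v"
  using assms(4)
proof (induction s arbitrary: z)
  case 0
  then show ?case
    using additive_map_zero[OF additive(1)] additive_map_zero[OF additive(2)]
    by (auto simp: sum_of_kth_powers_0_iff)
next
  case (Suc s)
  then obtain z' y where "sum_of_kth_powers K s z'" and z: "z = z' + y ^ K"
    by (auto simp: sum_of_kth_powers_Suc_iff)
  with Suc.IH obtain u v i j where uv: "i + j = s" "sum_of_kth_powers k i u"
    "sum_of_kth_powers k j v" "z' = \<phi> u + \<psi> v" by blast
  from powers obtain x where "y ^ K = \<phi> (x ^ k) \<or> y ^ K = \<psi> (x ^ k)" by blast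
  then show ?case
  proof
    assume "y ^ K = \<phi> (x ^ k)"
    then have "z = \<phi> (u + x ^ k) + \<psi> v" using z uv(4) additive by (simp add: algebra_simps)
    moreover have "sum_of_kth_powers k (Suc i) (u + x ^ k)"
      using uv(2) by (auto simp: sum_of_kth_powers_Suc_iff)
    ultimately show ?case
      using uv(1,3) by (intro exI[of _ "u + x ^ k"] exI[of _ v] exI[of _ "Suc i"] exI[of _ j]) simp
  next
    assume "y ^ K = \<psi> (x ^ k)"
    then have "z = \<phi> u + \<psi> (v + x ^ k)" using z uv(4) additive by (simp add: algebra_simps)
    moreover have "sum_of_kth_powers k (Suc j) (v + x ^ k)"
      using uv(3) by (auto simp: sum_of_kth_powers_Suc_iff)
    ultimately show ?case
      using uv(1,2) by (intro exI[of _ u] exI[of _ "v + x ^ k"] exI[of _ i] exI[of _ "Suc j"]) simp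
  qed
qed

lemma sum_of_kth_powers_waring_number:
  assumes "\<exists>s. \<forall>x::'a::{finite,field}. sum_of_kth_powers k s x"
  shows "sum_of_kth_powers k (waring_number k TYPE('a)) (x::'a)"
proof -
  have "\<forall>x::'a. sum_of_kth_powers k (waring_number k TYPE('a)) x"
    unfolding waring_number_def by (rule LeastI_ex[OF assms])
  then show ?thesis ..
qed

lemma exists_element_needing_waring_number:
  assumes "0 < k"
  shows "\<exists>u::'a::{finite,field}. \<forall>i. sum_of_kth_powers k i u \<longrightarrow> waring_number k TYPE('a) \<le> i"
proof (cases "waring_number k TYPE('a) = 0")
  case False
  then have "\<not> (\<forall>x::'a. sum_of_kth_powers k (waring_number k TYPE('a) - 1) x)"
    unfolding waring_number_def by (intro not_less_Least) auto
  then obtain u :: 'a where u: "\<not> sum_of_kth_powers k (waring_number k TYPE('a) - 1) u" by blast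
  have "waring_number k TYPE('a) \<le> i" if "sum_of_kth_powers k i u" for i
    using sum_of_kth_powers_mono[OF assms that, of "waring_number k TYPE('a) - 1"] u by linarith
  then show ?thesis by blast
qed simp

lemma waring_number_direct_sum:
  fixes \<phi> :: "'a::{finite,field} \<Rightarrow> 'b::{finite,field}" and \<omega> :: 'b
  assumes additive: "\<And>x y. \<phi> (x + y) = \<phi> x + \<phi> y"
    and bij: "bij (\<lambda>(u, v). \<phi> u + \<omega> * \<phi> v)"
    and powers: "range (\<lambda>y. y ^ K) = \<phi> ` range (\<lambda>x. x ^ k) \<union> (\<lambda>u. \<omega> * \<phi> u) ` range (\<lambda>x. x ^ k)"
    and "0 < k" and "0 < K"
    and waring: "\<exists>s. \<forall>x::'a. sum_of_kth_powers k s x"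
  shows "waring_number K TYPE('b) = 2 * waring_number k TYPE('a)"
proof -
  define g where "g = waring_number k TYPE('a)"
  have additive': "\<And>x y. \<omega> * \<phi> (x + y) = \<omega> * \<phi> x + \<omega> * \<phi> y"
    using additive by (simp add: distrib_left)
  have "\<phi> (x ^ k) \<in> range (\<lambda>y. y ^ K)" "\<omega> * \<phi> (x ^ k) \<in> range (\<lambda>y. y ^ K)" for x
    unfolding powers by blast+
  with sum_of_kth_powers_waring_number[OF waring]
  have image_sums: "sum_of_kth_powers K g (\<phi> u)" "sum_of_kth_powers K g (\<omega> * \<phi> u)" for u
    unfolding g_def by (metis sum_of_kth_powers_image[OF additive] sum_of_kth_powers_image[OF additive'])+
  show ?thesis
    unfolding waring_number_def[of K] g_def[symmetric]
  proof (rule Least_equality)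
    show "\<forall>z::'b. sum_of_kth_powers K (2 * g) z"
    proof
      fix z :: 'b
      obtain u v where "z = \<phi> u + \<omega> * \<phi> v"
        using surjD[OF bij_is_surj[OF bij], of z] by auto
      with sum_of_kth_powers_add[OF image_sums] show "sum_of_kth_powers K (2 * g) z"
        by (simp add: mult_2)
    qed
  next
    fix s assume "\<forall>z::'b. sum_of_kth_powers K s z"
    \<comment> \<open>both coordinates of \<open>\<phi> u0 + \<omega> * \<phi> u0\<close> need \<open>g\<close> summands\<close>
    obtain u0 :: 'a where hard: "\<And>i. sum_of_kth_powers k i u0 \<Longrightarrow> g \<le> i"
      using exists_element_needing_waring_number[OF \<open>0 < k\<close>] by (auto simp: g_def)
    obtain u v i j where "i + j = s" "sum_of_kth_powers k i u" "sum_of_kth_powers k j v"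
      and eq: "\<phi> u0 + \<omega> * \<phi> u0 = \<phi> u + \<omega> * \<phi> v"
      using sum_of_kth_powers_split[OF additive additive' _ \<open>\<forall>z. _\<close>[rule_format]] powers
      by blast
    moreover have "(u, v) = (u0, u0)"
      using injD[OF bij_is_inj[OF bij], of "(u, v)" "(u0, u0)"] eq by simp
    ultimately show "2 * g \<le> s" using hard[of i] hard[of j] by simp
  qed
qed

lemma uniform_sum_of_kth_powers_bound:
  assumes "0 < k" and "\<And>x::'a::{finite,field}. \<exists>s. sum_of_kth_powers k s x"
  shows "\<exists>s. \<forall>x::'a. sum_of_kth_powers k s x"
proof -
  define len where "len x = (SOME s. sum_of_kth_powers k s x)" for x :: 'a
  have len: "sum_of_kth_powers k (len x) x" for x
    unfolding len_def using assms(2) by (rule someI_ex)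
  have "sum_of_kth_powers k (Max (range len)) (x::'a)" for x
    by (rule sum_of_kth_powers_mono[OF assms(1) len]) simp
  then show ?thesis by blast
qed

definition kth_power_sums :: "nat \<Rightarrow> 'a::field set" where
  "kth_power_sums k = {x. \<exists>s. sum_of_kth_powers k s x}"

lemma kth_power_sums_add: "x \<in> kth_power_sums k \<Longrightarrow> y \<in> kth_power_sums k \<Longrightarrow> x + y \<in> kth_power_sums k"
  unfolding kth_power_sums_def using sum_of_kth_powers_add by blast

lemma kth_power_sums_mult: "x \<in> kth_power_sums k \<Longrightarrow> y \<in> kth_power_sums k \<Longrightarrow> x * y \<in> kth_power_sums k"
  unfolding kth_power_sums_def using sum_of_kth_powers_mult by blast

lemma power_in_kth_power_sums: "y ^ k \<in> kth_power_sums k"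
  unfolding kth_power_sums_def using sum_of_kth_powers_power by blast

lemma zero_in_kth_power_sums: "0 \<in> kth_power_sums k"
  unfolding kth_power_sums_def using sum_of_kth_powers_0_iff by blast

lemma kth_power_sums_diff:
  fixes x y :: "'a::{finite,field}"
  assumes "x \<in> kth_power_sums k" and "y \<in> kth_power_sums k"
  shows "x - y \<in> kth_power_sums k"
proof -
  have "of_nat n \<in> (kth_power_sums k :: 'a set)" for n
  proof (induction n)
    case (Suc n)
    from kth_power_sums_add[OF power_in_kth_power_sums[of 1 k] this] show ?case by simp
  qed (simp add: zero_in_kth_power_sums)
  moreover have "(of_nat (CARD('a) - 1) :: 'a) = - 1"
    using of_nat_card_eq_0[where 'a='a] one_less_card_field[where 'a='a]
    by (simp add: of_nat_diff eq_neg_iff_add_eq_0)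
  ultimately have "- 1 \<in> (kth_power_sums k :: 'a set)" by metis
  with assms show ?thesis
    using kth_power_sums_add[OF assms(1) kth_power_sums_mult[of "- 1" k y]] by simp
qed

lemma kth_power_sums_eq_UNIV:
  assumes "prime p" and card: "CARD('a::{finite,field}) = p ^ a"
    and primitive: "primitive_divisor c p a" and k: "k * c = p ^ a - 1"
  shows "kth_power_sums k = (UNIV :: 'a set)"
proof (rule ccontr)
  \<comment> \<open>a proper subring has \<open>p ^ t\<close> elements with \<open>t < a\<close>, yet contains \<open>g ^ k\<close> of order \<open>c\<close>\<close>
  let ?L = "kth_power_sums k :: 'a set"
  assume "?L \<noteq> UNIV"
  have "card ?L dvd p ^ a"
    unfolding card[symmetric]
    by (rule card_additive_subgroup_dvd) (simp_all add: zero_in_kth_power_sums kth_power_sums_diff)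
  then obtain t where "t \<le> a" and card_L: "card ?L = p ^ t"
    using divides_primepow_nat[OF \<open>prime p\<close>] by auto
  have "card ?L < CARD('a)" using \<open>?L \<noteq> UNIV\<close> by (intro psubset_card_mono) auto
  with card card_L \<open>t \<le> a\<close> have "t < a" using le_neq_implies_less by fastforce
  have "card {0::'a, 1} \<le> card ?L"
    using zero_in_kth_power_sums power_in_kth_power_sums[of 1 k] by (intro card_mono) auto
  with card_L have "t \<noteq> 0" by (cases t) simp_all
  obtain g :: 'a where "g \<noteq> 0" and ord: "\<And>i. g ^ i = 1 \<longleftrightarrow> CARD('a) - 1 dvd i"
    using exists_primitive_element[where 'a='a] by blast
  have "g ^ k \<noteq> 0" using \<open>g \<noteq> 0\<close> by simp
  then have "(g ^ k) ^ card (?L - {0}) = 1"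
    using power_card_nonzero_eq_1[OF kth_power_sums_mult power_in_kth_power_sums] by blast
  moreover have "card (?L - {0}) = p ^ t - 1"
    using card_L zero_in_kth_power_sums[of k, where 'a='a] by (simp add: card_Diff_singleton)
  ultimately have "g ^ (k * (p ^ t - 1)) = 1" by (simp add: power_mult)
  then have "k * c dvd k * (p ^ t - 1)"
    using ord card k by simp
  moreover have "k \<noteq> 0" using k card one_less_card_field[where 'a='a] by (cases k) auto
  ultimately have "c dvd p ^ t - 1" by (simp add: nat_mult_dvd_cancel_disj)
  with primitive \<open>t \<noteq> 0\<close> \<open>t < a\<close> show False
    by (auto simp: primitive_divisor_def)
qed

section \<open>Embedding one finite field into another\<close>

locale field_hom =
  fixes \<phi> :: "'a::field \<Rightarrow> 'b::field"
  assumes hom_add: "\<phi> (x + y) = \<phi> x + \<phi> y"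
    and hom_mult: "\<phi> (x * y) = \<phi> x * \<phi> y"
    and hom_one: "\<phi> 1 = 1"
begin

lemma hom_zero: "\<phi> 0 = 0"
  using additive_map_zero hom_add by blast

lemma hom_power: "\<phi> (x ^ n) = \<phi> x ^ n"
  by (induction n) (simp_all add: hom_one hom_mult)

lemma hom_diff: "\<phi> (x - y) = \<phi> x - \<phi> y"
  using hom_add[of "x - y" y] by (simp add: eq_diff_eq)

lemma hom_eq_0_iff: "\<phi> x = 0 \<longleftrightarrow> x = 0"
proof
  assume "\<phi> x = 0"
  show "x = 0"
  proof (rule ccontr)
    assume "x \<noteq> 0"
    then have "\<phi> x * \<phi> (inverse x) = 1" by (simp add: hom_one flip: hom_mult)
    with \<open>\<phi> x = 0\<close> show False by simp
  qed
qed (simp add: hom_zero)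

lemma inj_hom: "inj \<phi>"
  by (rule injI) (metis hom_diff hom_eq_0_iff right_minus_eq)

lemma hom_inverse: "\<phi> (inverse x) = inverse (\<phi> x)"
proof (cases "x = 0")
  case False
  then have "\<phi> x * \<phi> (inverse x) = 1" by (simp add: hom_one flip: hom_mult)
  then show ?thesis by (simp add: inverse_unique)
qed (simp add: hom_zero)

lemma hom_divide: "\<phi> (x / y) = \<phi> x / \<phi> y"
  by (simp add: divide_inverse hom_mult hom_inverse)

end

lemma map_poly_of_int_add:
  "map_poly (of_int :: int \<Rightarrow> 'a::comm_ring_1) (f + g) = map_poly of_int f + map_poly of_int g"
  by (rule poly_eqI) (simp add: coeff_map_poly)

lemma map_poly_of_int_mult:
  "map_poly (of_int :: int \<Rightarrow> 'a::comm_ring_1) (f * g) = map_poly of_int f * map_poly of_int g"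
  by (rule poly_eqI) (simp add: coeff_map_poly coeff_mult)

lemma map_poly_of_int_smult:
  "map_poly (of_int :: int \<Rightarrow> 'a::comm_ring_1) (smult c f) = smult (of_int c) (map_poly of_int f)"
  by (rule poly_eqI) (simp add: coeff_map_poly)

lemma map_poly_of_int_diff:
  "map_poly (of_int :: int \<Rightarrow> 'a::comm_ring_1) (f - g) = map_poly of_int f - map_poly of_int g"
  by (rule poly_eqI) (simp add: coeff_map_poly)

lemma of_int_eq_0_iff_same_CHAR:
  assumes "CHAR('a::comm_ring_1) = CHAR('b::comm_ring_1)"
  shows "of_int z = (0::'a) \<longleftrightarrow> of_int z = (0::'b)"
  using assms by (simp add: of_int_eq_0_iff_char_dvd)

lemma map_poly_of_int_eq_0_iff_same_CHAR:
  assumes "CHAR('a::comm_ring_1) = CHAR('b::comm_ring_1)"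
  shows "map_poly (of_int :: int \<Rightarrow> 'a) f = 0 \<longleftrightarrow> map_poly (of_int :: int \<Rightarrow> 'b) f = 0"
  using of_int_eq_0_iff_same_CHAR[OF assms] by (simp add: poly_eq_iff coeff_map_poly)

text \<open>
  Integer polynomials stand in for polynomials over the prime field: a polynomial of least
  degree among those vanishing at \<open>\<alpha>\<close> whose leading coefficient is nonzero modulo the
  characteristic plays the role of the minimal polynomial of \<open>\<alpha>\<close>.
\<close>

lemma exists_minimal_int_poly:
  fixes \<alpha> :: "'a::field"
  assumes "poly (map_poly of_int f) \<alpha> = 0" and "of_int (lead_coeff f) \<noteq> (0::'a)"
  shows "\<exists>m. poly (map_poly of_int m) \<alpha> = 0 \<and> of_int (lead_coeff m) \<noteq> (0::'a)
           \<and> (\<forall>r. poly (map_poly of_int r) \<alpha> = 0 \<longrightarrow> degree r < degree m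
                   \<longrightarrow> map_poly (of_int :: int \<Rightarrow> 'a) r = 0)"
proof -
  define admissible where
    "admissible g \<longleftrightarrow> poly (map_poly of_int g) \<alpha> = 0 \<and> of_int (lead_coeff g) \<noteq> (0::'a)" for g
  obtain m where "admissible m" and least: "\<And>g. admissible g \<Longrightarrow> degree m \<le> degree g"
    using ex_has_least_nat[of admissible f degree] assms by (auto simp: admissible_def)
  have "map_poly (of_int :: int \<Rightarrow> 'a) r = 0"
    if "poly (map_poly of_int r) \<alpha> = 0" and "degree r < degree m" for r
  proof (rule ccontr)
    assume nonzero: "map_poly (of_int :: int \<Rightarrow> 'a) r \<noteq> 0"
    define j where "j = degree (map_poly (of_int :: int \<Rightarrow> 'a) r)"
    define r' where "r' = poly_cutoff (Suc j) r"
    have same_image: "map_poly (of_int :: int \<Rightarrow> 'a) r' = map_poly of_int r"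
    proof (rule poly_eqI)
      fix i
      have "coeff (map_poly (of_int :: int \<Rightarrow> 'a) r) i = 0" if "j < i"
        using that by (simp add: j_def coeff_eq_0)
      then show "coeff (map_poly (of_int :: int \<Rightarrow> 'a) r') i = coeff (map_poly of_int r) i"
        by (auto simp: r'_def coeff_map_poly coeff_poly_cutoff)
    qed
    have top: "of_int (coeff r j) \<noteq> (0::'a)"
      using nonzero by (metis coeff_map_poly j_def leading_coeff_0_iff of_int_0)
    then have "degree r' = j"
      by (intro antisym degree_le le_degree) (auto simp: r'_def coeff_poly_cutoff)
    with top have "admissible r'"
      using that(1) same_image by (simp add: admissible_def r'_def coeff_poly_cutoff)
    moreover have "j \<le> degree r"
      unfolding j_def by (rule map_poly_degree_leq)
    ultimately show False
      using least[of r'] \<open>degree r' = j\<close> that(2) by simp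
  qed
  with \<open>admissible m\<close> show ?thesis unfolding admissible_def by blast
qed

lemma minimal_int_poly_divides:
  fixes \<alpha> :: "'a::field"
  assumes same_char: "CHAR('a) = CHAR('b::field)"
    and m_lead: "of_int (lead_coeff m) \<noteq> (0::'a)" and m_root: "poly (map_poly of_int m) \<alpha> = 0"
    and m_minimal: "\<And>r. poly (map_poly of_int r) \<alpha> = 0 \<Longrightarrow> degree r < degree m
                         \<Longrightarrow> map_poly (of_int :: int \<Rightarrow> 'a) r = 0"
    and "poly (map_poly of_int f) \<alpha> = 0"
  shows "\<exists>c h. c \<noteq> (0::'b) \<and> smult c (map_poly of_int f) = map_poly of_int m * h"
proof -
  have "m \<noteq> 0" using m_lead by auto
  obtain h r where "pseudo_divmod f m = (h, r)" by fastforce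
  from pseudo_divmod[OF \<open>m \<noteq> 0\<close> this]
  have division: "smult (lead_coeff m ^ (Suc (degree f) - degree m)) f = m * h + r"
    and "r = 0 \<or> degree r < degree m" by auto
  have "poly (map_poly of_int r) \<alpha> = (0::'a)"
    using arg_cong[OF division, of "\<lambda>g. poly (map_poly of_int g) \<alpha>"] assms
    by (simp add: map_poly_of_int_smult map_poly_of_int_mult map_poly_of_int_add)
  with \<open>r = 0 \<or> degree r < degree m\<close> have "map_poly (of_int :: int \<Rightarrow> 'a) r = 0"
    using m_minimal by auto
  then have "map_poly (of_int :: int \<Rightarrow> 'b) r = 0"
    using map_poly_of_int_eq_0_iff_same_CHAR[OF same_char] by blast
  then have "smult (of_int (lead_coeff m) ^ (Suc (degree f) - degree m)) (map_poly of_int f)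
      = map_poly (of_int :: int \<Rightarrow> 'b) m * map_poly of_int h"
    using arg_cong[OF division, of "map_poly (of_int :: int \<Rightarrow> 'b)"]
    by (simp add: map_poly_of_int_smult map_poly_of_int_mult map_poly_of_int_add)
  moreover have "of_int (lead_coeff m) ^ (Suc (degree f) - degree m) \<noteq> (0::'b)"
    using m_lead of_int_eq_0_iff_same_CHAR[OF same_char] by simp
  ultimately show ?thesis by (intro exI conjI)
qed

lemma int_poly_root_transfer:
  fixes \<alpha> :: "'a::field" and \<beta> :: "'b::field"
  assumes same_char: "CHAR('a) = CHAR('b)"
    and m_lead: "of_int (lead_coeff m) \<noteq> (0::'a)" and m_root: "poly (map_poly of_int m) \<alpha> = 0"
    and m_minimal: "\<And>r. poly (map_poly of_int r) \<alpha> = 0 \<Longrightarrow> degree r < degree m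
                         \<Longrightarrow> map_poly (of_int :: int \<Rightarrow> 'a) r = 0"
    and "poly (map_poly of_int m) \<beta> = 0"
    and "poly (map_poly of_int f) \<alpha> = 0"
  shows "poly (map_poly of_int f) \<beta> = 0"
proof -
  obtain c :: 'b and h where "c \<noteq> 0" and "smult c (map_poly of_int f) = map_poly of_int m * h"
    using minimal_int_poly_divides[OF assms(1-4,6)] by blast
  from arg_cong[OF this(2), of "\<lambda>g. poly g \<beta>"] \<open>c \<noteq> 0\<close> assms(5) show ?thesis by simp
qed

definition fermat_poly :: "nat \<Rightarrow> int poly" where
  "fermat_poly q = monom 1 q - monom 1 1"

lemma coeff_fermat_poly:
  "1 < q \<Longrightarrow> coeff (fermat_poly q) i = (if i = q then 1 else if i = 1 then -1 else 0)"
  by (simp add: fermat_poly_def)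

lemma degree_fermat_poly: "1 < q \<Longrightarrow> degree (fermat_poly q) = q"
  by (intro antisym degree_le le_degree) (auto simp: coeff_fermat_poly)

lemma poly_fermat_poly: "poly (map_poly of_int (fermat_poly q)) (x::'a::comm_ring_1) = x ^ q - x"
  by (simp add: fermat_poly_def map_poly_of_int_diff map_poly_monom poly_monom)

lemma card_fixed_points_power_ge:
  assumes "1 < q" and "q - 1 dvd CARD('a::{finite,field}) - 1"
  shows "q \<le> card {y::'a. y ^ q = y}"
proof -
  have power_q: "z ^ q = z * z ^ (q - 1)" for z :: 'a
    using \<open>1 < q\<close> by (cases q) simp_all
  have "insert 0 {z::'a. z ^ (q - 1) = 1} \<subseteq> {y. y ^ q = y}"
    by (auto simp: power_q)
  moreover have "(0::'a) \<notin> {z. z ^ (q - 1) = 1}"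
    using \<open>1 < q\<close> by (simp add: power_0_left)
  then have "card (insert 0 {z::'a. z ^ (q - 1) = 1}) = q"
    using card_roots_of_unity[OF assms(2)] \<open>1 < q\<close> by simp
  ultimately show ?thesis by (metis card_mono finite)
qed

lemma exists_root_of_minimal_int_poly:
  fixes \<alpha> :: "'a::{finite,field}"
  assumes same_char: "CHAR('a) = CHAR('b::{finite,field})"
    and dvd: "CARD('a) - 1 dvd CARD('b) - 1"
    and m_lead: "of_int (lead_coeff m) \<noteq> (0::'a)" and m_root: "poly (map_poly of_int m) \<alpha> = 0"
    and m_minimal: "\<And>r. poly (map_poly of_int r) \<alpha> = 0 \<Longrightarrow> degree r < degree m
                         \<Longrightarrow> map_poly (of_int :: int \<Rightarrow> 'a) r = 0"
  shows "\<exists>\<beta>::'b. poly (map_poly of_int m) \<beta> = 0"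
proof (rule ccontr)
  \<comment> \<open>otherwise the cofactor of \<open>m\<close> in \<open>X ^ q - X\<close> would have all \<open>q\<close> roots of the latter\<close>
  assume no_root: "\<not> (\<exists>\<beta>::'b. poly (map_poly of_int m) \<beta> = 0)"
  define q where "q = CARD('a)"
  have "1 < q" using one_less_card_field[where 'a='a] by (simp add: q_def)
  have "poly (map_poly of_int (fermat_poly q)) \<alpha> = 0"
    using power_card_eq_self[of \<alpha>] by (simp add: q_def poly_fermat_poly)
  then obtain c :: 'b and h where "c \<noteq> 0"
    and factor: "smult c (map_poly of_int (fermat_poly q)) = map_poly of_int m * h"
    using minimal_int_poly_divides[OF same_char m_lead m_root m_minimal] by blast
  have "degree (map_poly (of_int :: int \<Rightarrow> 'b) (fermat_poly q)) = q"
    using map_poly_degree_eq[of "of_int :: int \<Rightarrow> 'b" "fermat_poly q"] \<open>1 < q\<close>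
    by (simp add: degree_fermat_poly coeff_fermat_poly)
  with \<open>c \<noteq> 0\<close> have degree_product: "degree (map_poly (of_int :: int \<Rightarrow> 'b) m * h) = q"
    by (simp flip: factor)
  have degree_m: "degree (map_poly (of_int :: int \<Rightarrow> 'b) m) = degree m"
    using map_poly_degree_eq[of "of_int :: int \<Rightarrow> 'b" m] m_lead of_int_eq_0_iff_same_CHAR[OF same_char]
    by simp
  have "degree m \<noteq> 0"
  proof
    assume "degree m = 0"
    then obtain a where "m = [:a:]" by (rule degree_eq_zeroE)
    with m_root m_lead show False by (simp add: map_poly_pCons)
  qed
  have "h \<noteq> 0" using degree_product \<open>1 < q\<close> by auto
  moreover have "map_poly (of_int :: int \<Rightarrow> 'b) m \<noteq> 0"
    using degree_m \<open>degree m \<noteq> 0\<close> by auto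
  ultimately have "degree h < q"
    using degree_product degree_m \<open>degree m \<noteq> 0\<close> by (simp add: degree_mult_eq)
  have "{y::'b. y ^ q = y} \<subseteq> {y. poly h y = 0}"
  proof
    fix y :: 'b assume "y \<in> {y. y ^ q = y}"
    then have "poly (map_poly of_int m) y * poly h y = 0"
      using arg_cong[OF factor, of "\<lambda>g. poly g y"] by (simp add: poly_fermat_poly)
    with no_root show "y \<in> {y. poly h y = 0}" by simp
  qed
  then have "card {y::'b. y ^ q = y} \<le> card {y. poly h y = 0}"
    by (intro card_mono) simp_all
  also have "\<dots> \<le> degree h"
    by (rule card_poly_roots_bound[OF \<open>h \<noteq> 0\<close>])
  finally have "card {y::'b. y ^ q = y} \<le> degree h" .
  with card_fixed_points_power_ge[OF \<open>1 < q\<close>, where 'a='b] dvd \<open>degree h < q\<close> show False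
    by (simp add: q_def)
qed

lemma field_hom_from_int_poly_eval:
  fixes \<alpha> :: "'a::field" and \<beta> :: "'b::field"
  assumes generates: "\<And>x. \<exists>f. poly (map_poly of_int f) \<alpha> = x"
    and transfer: "\<And>f. poly (map_poly of_int f) \<alpha> = 0 \<Longrightarrow> poly (map_poly of_int f) \<beta> = 0"
  shows "\<exists>\<phi>::'a \<Rightarrow> 'b. field_hom \<phi>"
proof -
  define \<phi> where "\<phi> x = poly (map_poly of_int (SOME f. poly (map_poly of_int f) \<alpha> = x)) \<beta>" for x
  have \<phi>_eval: "\<phi> (poly (map_poly of_int f) \<alpha>) = poly (map_poly of_int f) \<beta>" for f
  proof -
    define g where "g = (SOME g. poly (map_poly of_int g) \<alpha> = poly (map_poly of_int f) \<alpha>)"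
    have "poly (map_poly of_int g) \<alpha> = poly (map_poly of_int f) \<alpha>"
      unfolding g_def by (rule someI) (rule refl)
    then have "poly (map_poly of_int (g - f)) \<alpha> = 0"
      by (simp add: map_poly_of_int_diff)
    then have "poly (map_poly of_int (g - f)) \<beta> = 0" by (rule transfer)
    then show ?thesis by (simp add: \<phi>_def g_def [symmetric] map_poly_of_int_diff)
  qed
  have "field_hom \<phi>"
  proof
    fix x y :: 'a
    obtain f g where x: "x = poly (map_poly of_int f) \<alpha>" and y: "y = poly (map_poly of_int g) \<alpha>"
      using generates by metis
    show "\<phi> (x + y) = \<phi> x + \<phi> y"
      using \<phi>_eval[of "f + g"] by (simp add: x y \<phi>_eval map_poly_of_int_add)
    show "\<phi> (x * y) = \<phi> x * \<phi> y"
      using \<phi>_eval[of "f * g"] by (simp add: x y \<phi>_eval map_poly_of_int_mult)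
  next
    show "\<phi> 1 = 1" using \<phi>_eval[of 1] by simp
  qed
  then show ?thesis by blast
qed

lemma exists_field_hom:
  assumes same_char: "CHAR('a::{finite,field}) = CHAR('b::{finite,field})"
    and dvd: "CARD('a) - 1 dvd CARD('b) - 1"
  shows "\<exists>\<phi>::'a \<Rightarrow> 'b. field_hom \<phi>"
proof -
  obtain \<alpha> :: 'a where gen: "\<forall>x. x \<noteq> 0 \<longrightarrow> (\<exists>i. x = \<alpha> ^ i)"
    using exists_primitive_element[where 'a='a] by blast
  have "poly (map_poly of_int (fermat_poly CARD('a))) \<alpha> = 0"
    using power_card_eq_self[of \<alpha>] by (simp add: poly_fermat_poly)
  moreover have "lead_coeff (fermat_poly CARD('a)) = 1"
    using one_less_card_field[where 'a='a] by (simp add: degree_fermat_poly coeff_fermat_poly)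
  ultimately obtain m where m: "poly (map_poly of_int m) \<alpha> = 0" "of_int (lead_coeff m) \<noteq> (0::'a)"
    and minimal: "\<And>r. poly (map_poly of_int r) \<alpha> = 0 \<Longrightarrow> degree r < degree m
                      \<Longrightarrow> map_poly (of_int :: int \<Rightarrow> 'a) r = 0"
    using exists_minimal_int_poly[of _ \<alpha>] by (metis of_int_1 one_neq_zero)
  obtain \<beta> :: 'b where "poly (map_poly of_int m) \<beta> = 0"
    using exists_root_of_minimal_int_poly[OF same_char dvd m(2,1) minimal] by blast
  note transfer = int_poly_root_transfer[OF same_char m(2,1) minimal this]
  have "\<exists>f. poly (map_poly of_int f) \<alpha> = x" for x
  proof (cases "x = 0")
    case False
    then obtain i where "x = \<alpha> ^ i" using gen by blast
    then show ?thesis by (intro exI[of _ "monom 1 i"]) (simp add: map_poly_monom poly_monom)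
  qed (intro exI[of _ 0], simp)
  from field_hom_from_int_poly_eval[OF this transfer] show ?thesis .
qed

section \<open>The quadratic extension\<close>

lemma image_roots_of_unity:
  fixes \<phi> :: "'a::{finite,field} \<Rightarrow> 'b::{finite,field}"
  assumes "field_hom \<phi>" and "d dvd CARD('a) - 1" and "d dvd CARD('b) - 1"
  shows "\<phi> ` {w. w ^ d = 1} = {z. z ^ d = 1}"
proof (rule card_subset_eq)
  interpret field_hom \<phi> by fact
  show "\<phi> ` {w. w ^ d = 1} \<subseteq> {z. z ^ d = 1}"
    by (auto simp: hom_one simp flip: hom_power)
  have "card (\<phi> ` {w. w ^ d = 1}) = card {w::'a. w ^ d = 1}"
    using inj_hom by (simp add: card_image inj_on_subset)
  then show "card (\<phi> ` {w. w ^ d = 1}) = card {z::'b. z ^ d = 1}"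
    using card_roots_of_unity[OF assms(2)] card_roots_of_unity[OF assms(3)] by simp
qed simp

lemma range_power_quadratic_extension:
  fixes \<phi> :: "'a::{finite,field} \<Rightarrow> 'b::{finite,field}"
  assumes "field_hom \<phi>" and k: "CARD('a) - 1 = k * c" and K: "CARD('b) - 1 = 2 * c * K"
    and \<omega>: "\<omega> ^ c = - 1" and "0 < k" and "0 < K"
  shows "range (\<lambda>y::'b. y ^ K) = \<phi> ` range (\<lambda>x. x ^ k) \<union> (\<lambda>u. \<omega> * \<phi> u) ` range (\<lambda>x. x ^ k)"
proof -
  interpret field_hom \<phi> by fact
  have "range (\<lambda>x::'a. x ^ k) = insert 0 {w. w ^ c = 1}"
    using range_power_eq[of k, where 'a='a] k \<open>0 < k\<close> by simp
  moreover have "\<phi> ` {w. w ^ c = 1} = {z. z ^ c = 1}"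
    using image_roots_of_unity[OF assms(1), of c] k K by simp
  ultimately have A: "\<phi> ` range (\<lambda>x. x ^ k) = insert 0 {z. z ^ c = 1}"
    by (simp add: hom_zero)
  have "(\<lambda>u. \<omega> * \<phi> u) ` range (\<lambda>x. x ^ k) = (\<lambda>z. \<omega> * z) ` (\<phi> ` range (\<lambda>x. x ^ k))"
    by (simp add: image_image)
  with A have B: "(\<lambda>u. \<omega> * \<phi> u) ` range (\<lambda>x. x ^ k) = insert 0 ((\<lambda>z. \<omega> * z) ` {z. z ^ c = 1})"
    by simp
  have "range (\<lambda>y::'b. y ^ K) = insert 0 {z. z ^ (2 * c) = 1}"
    using range_power_eq[of K, where 'a='b] K \<open>0 < K\<close> by simp
  with A B show ?thesis
    using roots_of_unity_double[OF \<omega>] by auto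
qed

lemma root_of_minus_one_notin_subfield:
  fixes \<phi> :: "'a::{finite,field} \<Rightarrow> 'b::field"
  assumes "field_hom \<phi>" and k: "CARD('a) - 1 = k * c" and "odd k"
    and \<omega>: "\<omega> ^ c = - 1" and two: "(2::'b) \<noteq> 0"
  shows "\<omega> \<notin> range \<phi>"
proof
  interpret field_hom \<phi> by fact
  \<comment> \<open>the image of \<open>\<phi>\<close> is fixed by \<open>x \<mapsto> x ^ CARD('a)\<close>, whereas \<open>\<omega> ^ CARD('a) = - \<omega>\<close>\<close>
  assume "\<omega> \<in> range \<phi>"
  then obtain x where "\<omega> = \<phi> x" by blast
  then have fixed: "\<omega> ^ CARD('a) = \<omega>"
    by (simp add: power_card_eq_self flip: hom_power)
  have "\<omega> ^ CARD('a) = \<omega> * (\<omega> ^ c) ^ k"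
    using k one_less_card_field[where 'a='a]
    by (metis Suc_diff_1 less_trans zero_less_one mult.commute power_Suc power_mult)
  with fixed \<omega> \<open>odd k\<close> have "\<omega> + \<omega> = 0" by simp
  then have "\<omega> = 0" using two by (metis mult_2 mult_eq_0_iff)
  with \<omega> have "(1::'b) = - 1" by (cases c) simp_all
  with two show False by (simp add: eq_neg_iff_add_eq_0)
qed

lemma bij_coordinates_over_subfield:
  fixes \<phi> :: "'a::{finite,field} \<Rightarrow> 'b::{finite,field}"
  assumes "field_hom \<phi>" and card: "CARD('b) = CARD('a) * CARD('a)" and "\<omega> \<notin> range \<phi>"
  shows "bij (\<lambda>(u, v). \<phi> u + \<omega> * \<phi> v)"
proof -
  interpret field_hom \<phi> by fact
  have "inj (\<lambda>(u, v). \<phi> u + \<omega> * \<phi> v)"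
  proof (rule injI, clarify)
    fix u v u' v'
    assume eq: "\<phi> u + \<omega> * \<phi> v = \<phi> u' + \<omega> * \<phi> v'"
    show "u = u' \<and> v = v'"
    proof (cases "v = v'")
      case True
      with eq inj_hom show ?thesis by (simp add: inj_eq)
    next
      case False
      then have "\<phi> v - \<phi> v' \<noteq> 0" by (simp add: inj_hom inj_eq)
      moreover have "\<omega> * (\<phi> v - \<phi> v') = \<phi> u' - \<phi> u"
        using eq by (simp add: algebra_simps)
      ultimately have "\<omega> = \<phi> ((u' - u) / (v - v'))"
        by (simp add: hom_divide hom_diff eq_divide_eq)
      with \<open>\<omega> \<notin> range \<phi>\<close> show ?thesis by blast
    qed
  qed
  moreover have "card (UNIV :: ('a \<times> 'a) set) = CARD('b)"
    using card by (simp flip: UNIV_Times_UNIV add: card_cartesian_product)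
  ultimately show ?thesis
    by (metis bij_betw_def card_image card_subset_eq finite subset_UNIV)
qed

lemma odd_square_minus_one_eq:
  fixes q :: nat
  assumes "odd q" and "q - 1 = k * c"
  shows "q * q - 1 = 2 * c * (k * ((q + 1) div 2))"
proof -
  have "q * q - 1 = (q - 1) * (q + 1)"
    using \<open>odd q\<close> by (cases q) (simp_all add: algebra_simps)
  also have "q + 1 = 2 * ((q + 1) div 2)"
    using \<open>odd q\<close> by simp
  finally show ?thesis using assms(2) by (simp add: mult_ac)
qed

theorem waring_number_quadratic_extension:
  assumes same_char: "CHAR('a::{finite,field}) = CHAR('b::{finite,field})" and "(2::'b) \<noteq> 0"
    and card: "CARD('b) = CARD('a) * CARD('a)"
    and k: "CARD('a) - 1 = k * c" and "odd k" and K: "CARD('b) - 1 = 2 * c * K"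
    and waring: "\<exists>s. \<forall>x::'a. sum_of_kth_powers k s x"
  shows "waring_number K TYPE('b) = 2 * waring_number k TYPE('a)"
proof -
  have "0 < CARD('a) - 1" using one_less_card_field[where 'a='a] by simp
  with k have "0 < k" by simp
  have "0 < CARD('b) - 1" using one_less_card_field[where 'a='b] by simp
  with K have "0 < K" by simp
  have "CARD('b) - 1 = (CARD('a) - 1) * (CARD('a) + 1)"
    using card one_less_card_field[where 'a='a] by (cases "CARD('a)") (simp_all add: algebra_simps)
  then have "CARD('a) - 1 dvd CARD('b) - 1" by (simp only: dvd_triv_left)
  with same_char obtain \<phi> :: "'a \<Rightarrow> 'b" where hom: "field_hom \<phi>"
    using exists_field_hom[where 'a='a and 'b='b] by auto
  obtain \<omega> :: 'b where \<omega>: "\<omega> ^ c = - 1"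
    using exists_power_eq_minus_one[of c, where 'a='b] K by auto
  have "\<omega> \<notin> range \<phi>"
    using root_of_minus_one_notin_subfield[OF hom k \<open>odd k\<close> \<omega> \<open>(2::'b) \<noteq> 0\<close>] .
  with hom card have "bij (\<lambda>(u, v). \<phi> u + \<omega> * \<phi> v)"
    by (rule bij_coordinates_over_subfield)
  moreover have "range (\<lambda>y::'b. y ^ K)
      = \<phi> ` range (\<lambda>x. x ^ k) \<union> (\<lambda>u. \<omega> * \<phi> u) ` range (\<lambda>x. x ^ k)"
    using range_power_quadratic_extension[OF hom k K \<omega> \<open>0 < k\<close> \<open>0 < K\<close>] .
  ultimately show ?thesis
    using waring_number_direct_sum[OF field_hom.hom_add[OF hom] _ _ \<open>0 < k\<close> \<open>0 < K\<close> waring] by simp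
qed

theorem mainTheorem8:
  fixes p a c :: nat
  assumes "prime p" and "odd p" and "a > 0" and "c > 0"
    and "primitive_divisor c p a"
    and "odd ((p ^ a - 1) div c)"
    and "card (UNIV :: ('a::{finite,field}) set) = p ^ a"
    and "card (UNIV :: ('b::{finite,field}) set) = p ^ (2 * a)"
  shows "waring_number ((p ^ (2 * a) - 1) div (2 * c)) TYPE('b)
           = 2 * waring_number ((p ^ a - 1) div c) TYPE('a)"
proof (rule waring_number_quadratic_extension)
  note card_a = assms(7) and card_b = assms(8)
  show "CHAR('a) = CHAR('b)"
    using CHAR_eq_prime[OF assms(1,3) card_a] CHAR_eq_prime[OF assms(1) _ card_b] assms(3) by simp
  have "\<not> p dvd 2"
    using primes_dvd_imp_eq[OF assms(1) two_is_prime_nat] assms(2) by auto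
  then show "(2::'b) \<noteq> 0"
    using of_nat_eq_0_iff_char_dvd[of 2, where 'a='b] CHAR_eq_prime[OF assms(1) _ card_b] assms(3)
    by simp
  show card_b': "CARD('b) = CARD('a) * CARD('a)"
    using card_a card_b by (simp add: mult_2 power_add)
  show k: "CARD('a) - 1 = (p ^ a - 1) div c * c"
    using assms(5) card_a by (simp add: primitive_divisor_def)
  show "odd ((p ^ a - 1) div c)" by fact
  show "CARD('b) - 1 = 2 * c * ((p ^ (2 * a) - 1) div (2 * c))"
    using odd_square_minus_one_eq[OF _ k] card_a card_b' card_b assms(2,4) by simp
  have "0 < (p ^ a - 1) div c"
    using k card_a one_less_card_field[where 'a='a] by (cases "(p ^ a - 1) div c") simp_all
  moreover have "kth_power_sums ((p ^ a - 1) div c) = (UNIV :: 'a set)"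
    using k card_a by (intro kth_power_sums_eq_UNIV[OF assms(1) card_a assms(5)]) simp
  ultimately show "\<exists>s. \<forall>x::'a. sum_of_kth_powers ((p ^ a - 1) div c) s x"
    unfolding kth_power_sums_def by (intro uniform_sum_of_kth_powers_bound) blast+
qed

end
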